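(* Let $R$, $a$, $t$, $t_i$, $H_i$ and the polynomials $q_{\mu,i}$, $z_{\mu,i}$, $\sigma_{\mu,i}$ be as in the context, let $I=\langle t_1(X_1),\dots,t_r(X_r)\rangle\lhd R[X_1,\dots,X_r]$, and for $\mu\in H_1\times\dots\times H_r$ let $$h_\mu=\prod_{i=1}^r\frac{t_i(X_i)}{q_{\mu,i}(X_i)}\prod_{i=2}^r\sigma_{\mu,i},\qquad I_\mu=\langle q_{\mu,1},z_{\mu,2},\dots,z_{\mu,r}\rangle .$$ Then the annihilator of the ideal $\langle h_\mu+I\rangle$ in $R[X_1,\dots,X_r]/I$ is $(I_\mu+I)/I$.
   Context: $R$ is a finite commutative chain ring (finite commutative local ring whose ideals are totally ordered) with maximal ideal $M=\langle a\rangle$, $a$ of nilpotency index $t$, residue field $\mathbb F_q$; reduction mod $M$ is denoted $r\mapsto \bar r$ and extended coefficientwise to polynomials. $\mathbb F$ is an algebraic closure of $\mathbb F_q$. For $i=1,\dots,r$, $t_i(X_i)\in R[X_i]$ is monic with $\bar t_i$ square-free, and $H_i\subseteq\mathbb F$ is the set of roots of $\bar t_i$. For $\mu=(\mu_1,\dots,\mu_r)\in H_1\times\dots\times H_r$: $p_{\mu,i}$ is the minimal polynomial of $\mu_i$ over $\mathbb F_q$; for $i\ge2$, $w_{\mu,i}$ is the minimal polynomial of $\mu_i$ over $\mathbb F_q(\mu_1,\dots,\mu_{i-1})$ and $\pi_{\mu,i}=p_{\mu,i}/w_{\mu,i}$. $q_{\mu,i}\in R[X_i]$ is the unique monic factor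 of $t_i$ with $\bar q_{\mu,i}=p_{\mu,i}$ (Hensel's lemma). With $R_{i-1}=R[X_1,\dots,X_{i-1}]/\langle q_{\mu,1},z_{\mu,2},\dots,z_{\mu,i-1}\rangle$ (a local ring with residue field $\mathbb F_q(\mu_1,\dots,\mu_{i-1})$), Hensel's lemma gives a factorization $q_{\mu,i}=z_{\mu,i}\sigma_{\mu,i}$ in $R_{i-1}[X_i]$ into monic coprime factors reducing to $w_{\mu,i}$ and $\pi_{\mu,i}$; $z_{\mu,i},\sigma_{\mu,i}$ are regarded as polynomials in $R[X_1,\dots,X_i]$ by replacing the images of $X_j$ in $R_{i-1}$ by $X_j$. *)

theory Defs
  imports "HOL-Library.Poly_Mapping" "HOL-Computational_Algebra.Polynomial"
          "HOL-Computational_Algebra.Squarefree"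
begin

definition is_ideal :: "'a::comm_ring_1 set \<Rightarrow> bool" where
  "is_ideal J \<longleftrightarrow> 0 \<in> J \<and> (\<forall>x\<in>J. \<forall>y\<in>J. x + y \<in> J) \<and> (\<forall>x\<in>J. \<forall>y. y * x \<in> J)"

definition finite_chain_ring :: "'a::comm_ring_1 \<Rightarrow> nat \<Rightarrow> bool" where
  "finite_chain_ring a t \<longleftrightarrow>
     finite (UNIV :: 'a set) \<and>
     (\<forall>J1 J2. is_ideal (J1::'a set) \<and> is_ideal J2 \<longrightarrow> J1 \<subseteq> J2 \<or> J2 \<subseteq> J1) \<and>
     \<comment> \<open>local, with unique maximal ideal \<langle>a\<rangle>\<close>
     range (\<lambda>y. a * y) \<noteq> UNIV \<and>
     (\<forall>J. is_ideal (J::'a set) \<and> J \<noteq> UNIV \<longrightarrow> J \<subseteq> range (\<lambda>y. a * y)) \<and>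
     \<comment> \<open>nilpotency index t\<close>
     1 \<le> t \<and> a ^ t = 0 \<and> a ^ (t - 1) \<noteq> 0"

definition is_ring_hom :: "('a::comm_ring_1 \<Rightarrow> 'b::comm_ring_1) \<Rightarrow> bool" where
  "is_ring_hom f \<longleftrightarrow> f 0 = 0 \<and> f 1 = 1 \<and> (\<forall>x y. f (x + y) = f x + f y) \<and>
                       (\<forall>x y. f (x * y) = f x * f y)"

definition is_subfield :: "'f::field set \<Rightarrow> bool" where
  "is_subfield K \<longleftrightarrow> 0 \<in> K \<and> 1 \<in> K \<and> (\<forall>x\<in>K. \<forall>y\<in>K. x + y \<in> K \<and> x * y \<in> K) \<and>
                     (\<forall>x\<in>K. - x \<in> K \<and> inverse x \<in> K)"

definition gen_subfield :: "'f::field set \<Rightarrow> 'f set" where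
  "gen_subfield S = \<Inter> {K. is_subfield K \<and> S \<subseteq> K}"

definition is_algebraic_closure :: "('k::field \<Rightarrow> 'f::field) \<Rightarrow> bool" where
  "is_algebraic_closure emb \<longleftrightarrow> is_ring_hom emb \<and>
     (\<forall>p :: 'f poly. degree p \<ge> 1 \<longrightarrow> (\<exists>x. poly p x = 0)) \<and>
     (\<forall>x :: 'f. \<exists>p :: 'k poly. p \<noteq> 0 \<and> poly (map_poly emb p) x = 0)"

definition is_minpoly :: "'f::field set \<Rightarrow> 'f \<Rightarrow> 'f poly \<Rightarrow> bool" where
  "is_minpoly K \<alpha> p \<longleftrightarrow> set (coeffs p) \<subseteq> K \<and> lead_coeff p = 1 \<and> poly p \<alpha> = 0 \<and>
     (\<forall>g. set (coeffs g) \<subseteq> K \<and> poly g \<alpha> = 0 \<longrightarrow> p dvd g)"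

type_synonym 'a mpoly = "(nat \<Rightarrow>\<^sub>0 nat) \<Rightarrow>\<^sub>0 'a"

definition Var :: "nat \<Rightarrow> 'a::comm_ring_1 mpoly" where
  "Var i = Poly_Mapping.single (Poly_Mapping.single i 1) 1"

definition Const :: "'a::comm_ring_1 \<Rightarrow> 'a mpoly" where
  "Const c = Poly_Mapping.single 0 c"

text \<open>Univariate polynomial p regarded as the polynomial p(X_i).\<close>
definition in_var :: "nat \<Rightarrow> 'a::comm_ring_1 poly \<Rightarrow> 'a mpoly" where
  "in_var i p = poly (map_poly Const p) (Var i)"

definition vars :: "'a::zero mpoly \<Rightarrow> nat set" where
  "vars f = \<Union> (Poly_Mapping.keys ` Poly_Mapping.keys f)"

definition polys_in :: "nat set \<Rightarrow> 'a::zero mpoly set" where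
  "polys_in V = {f. vars f \<subseteq> V}"

definition ideal_gen :: "nat set \<Rightarrow> 'a::comm_ring_1 mpoly set \<Rightarrow> 'a mpoly set" where
  "ideal_gen V G = {f. \<exists>c. (\<forall>g\<in>G. c g \<in> polys_in V) \<and> f = (\<Sum>g\<in>G. c g * g)}"

definition monic_in :: "nat \<Rightarrow> 'a::comm_ring_1 mpoly \<Rightarrow> bool" where
  "monic_in i f \<longleftrightarrow> (\<exists>d g. f = Var i ^ d + g \<and>
      (\<forall>m\<in>Poly_Mapping.keys g. Poly_Mapping.lookup m i < d))"

definition mmap :: "('a::zero \<Rightarrow> 'b::zero) \<Rightarrow> 'a mpoly \<Rightarrow> 'b mpoly" where
  "mmap f p = Poly_Mapping.map f p"

text \<open>Substitute X_j := v j for all j \<noteq> i, keeping X_i as the variable of a univariate polynomial.\<close>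
definition eval_except :: "nat \<Rightarrow> (nat \<Rightarrow> 'f::field) \<Rightarrow> 'f mpoly \<Rightarrow> 'f poly" where
  "eval_except i v f = (\<Sum>m\<in>Poly_Mapping.keys f.
      smult (Poly_Mapping.lookup f m *
             (\<Prod>j\<in>Poly_Mapping.keys m - {i}. v j ^ Poly_Mapping.lookup m j))
            (monom 1 (Poly_Mapping.lookup m i)))"

end

theory Submission
  imports Defs
begin

text \<open>
  Let I be generated by the t_i(X_i), let J be generated by q_1, z_2, ..., z_r together with I,
  and let h_k be the product of the s_i = t_i/q_i for i \<le> k and of the \<sigma>_i for 2 \<le> i \<le> k,
  so that h_\<mu> = h_r.

  J annihilates h_\<mu> modulo I: by induction on k, the generators q_1, z_2, ..., z_k annihilate
  h_k. In the step, z_k \<sigma>_k \<equiv> q_k modulo the earlier generators, which already annihilate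
  h_(k-1), so z_k h_k \<equiv> q_k s_k h_(k-1) = t_k h_(k-1) \<equiv> 0.

  Conversely h_\<mu> is a unit modulo J, so everything annihilating it modulo I \<subseteq> J lies in J.
  Indeed each \<sigma>_i is coprime to z_i \<in> J and each s_i is coprime to q_i \<in> J. The latter
  coprimality holds over the residue field because t_i is square-free there, and a Bezout
  identity lifts from the residue field to R because the kernel \<langle>a\<rangle> of the reduction is
  nilpotent.
\<close>

lemma is_ring_hom_diff:
  assumes "is_ring_hom f" shows "f (x - y) = f x - f y"
proof -
  have "f (x - y) + f y = f x"
    using assms unfolding is_ring_hom_def by (metis diff_add_cancel)
  then show ?thesis by (simp add: eq_diff_eq)
qed

lemma is_ring_hom_sum:
  assumes "is_ring_hom f" shows "f (sum g A) = (\<Sum>x\<in>A. f (g x))"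
  using assms unfolding is_ring_hom_def by (induction A rule: infinite_finite_induct) auto

lemma map_poly_hom_add:
  assumes "is_ring_hom f" shows "map_poly f (p + q) = map_poly f p + map_poly f q"
  using assms by (intro poly_eqI) (simp add: coeff_map_poly is_ring_hom_def)

lemma map_poly_hom_diff:
  assumes "is_ring_hom f" shows "map_poly f (p - q) = map_poly f p - map_poly f q"
  using assms by (intro poly_eqI) (simp add: coeff_map_poly is_ring_hom_diff is_ring_hom_def)

lemma map_poly_hom_mult:
  assumes "is_ring_hom f" shows "map_poly f (p * q) = map_poly f p * map_poly f q"
proof -
  have "f 0 = 0" "\<And>x y. f (x * y) = f x * f y"
    using assms by (auto simp: is_ring_hom_def)
  then show ?thesis
    by (intro poly_eqI) (simp add: coeff_map_poly coeff_mult is_ring_hom_sum [OF assms])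
qed

lemma surj_map_poly:
  assumes "surj f" "f 0 = 0" shows "surj (map_poly f)"
proof -
  define g where "g c = (if c = 0 then 0 else inv f c)" for c
  have "f (g c) = c" for c
    using assms by (simp add: g_def surj_f_inv_f)
  then have "map_poly f (map_poly g P) = P" for P
    by (simp add: map_poly_map_poly assms(2) g_def o_def map_poly_idI)
  then show ?thesis by (rule surjI)
qed

lemma field_poly_bezout_common_divisor:
  fixes a b :: "'k::field poly"
  shows "\<exists>x y d. x * a + y * b = d \<and> d dvd a \<and> d dvd b"
proof (induction "euclidean_size b" arbitrary: a b rule: less_induct)
  case less
  show ?case
  proof (cases "b = 0")
    case True
    then show ?thesis by (metis add_0_right dvd_0_right dvd_refl mult_1)
  next
    case False
    then obtain x y d where xyd: "x * b + y * (a mod b) = d" "d dvd b" "d dvd a mod b"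
      using less mod_size_less by blast
    have "y * a + (x - y * (a div b)) * b = x * b + y * (a mod b)"
      by (simp add: algebra_simps minus_div_mult_eq_mod [symmetric])
    moreover have "d dvd a"
      using xyd dvd_mod_imp_dvd by blast
    ultimately show ?thesis
      using xyd by metis
  qed
qed

lemma field_poly_coprime_imp_bezout:
  fixes a b :: "'k::field poly"
  assumes "coprime a b" shows "\<exists>x y. x * a + y * b = 1"
proof -
  obtain x y d where xyd: "x * a + y * b = d" "d dvd a" "d dvd b"
    using field_poly_bezout_common_divisor by blast
  then obtain e where "d * e = 1"
    using assms coprime_common_divisor by (metis dvdE)
  then have "(e * x) * a + (e * y) * b = 1"
    using xyd(1) by (metis distrib_left mult.assoc mult.commute)
  then show ?thesis by blast
qed

lemma squarefree_mult_imp_coprime: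
  fixes a b :: "'a::algebraic_semidom"
  assumes "squarefree (a * b)" shows "coprime a b"
proof (rule coprimeI)
  fix c assume "c dvd a" "c dvd b"
  then have "c ^ 2 dvd a * b" by (simp add: power2_eq_square mult_dvd_mono)
  then show "is_unit c" using assms squarefreeD by blast
qed

lemma map_poly_eq_0_imp_nilpotent:
  fixes red :: "'a::comm_ring_1 \<Rightarrow> 'k::zero"
  assumes ker: "{x. red x = 0} = range (\<lambda>y. a * y)" and "a ^ n = 0" and "map_poly red E = 0"
  shows "E ^ n = 0"
proof -
  have red0: "red 0 = 0"
    using ker by (metis (mono_tags) mem_Collect_eq mult_zero_right rangeI)
  define D where "D c = (if c = 0 then 0 else SOME y. c = a * y)" for c
  have D: "c = a * D c" if "red c = 0" for c
    using that ker someI_ex[of "\<lambda>y. c = a * y"] by (auto simp: D_def)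
  have "coeff E k = a * D (coeff E k)" for k
    using assms(3) D by (metis coeff_0 coeff_map_poly red0)
  moreover have "D 0 = 0" by (simp add: D_def)
  ultimately have "E = smult a (map_poly D E)"
    by (intro poly_eqI) (simp add: coeff_map_poly)
  then show ?thesis
    by (metis assms(2) smult_0_left smult_power)
qed

lemma one_plus_nilpotent_inverse:
  fixes e :: "'a::comm_ring_1"
  assumes "e ^ n = 0" shows "(1 + e) * (\<Sum>i<n. (- e) ^ i) = 1"
  using one_diff_power_eq[of "- e" n] assms by (simp add: power_minus')

lemma coprime_reduction_imp_bezout:
  fixes red :: "'a::comm_ring_1 \<Rightarrow> 'k::field"
  assumes hom: "is_ring_hom red" and "surj red"
    and ker: "{x. red x = 0} = range (\<lambda>y. a * y)" and "a ^ n = 0"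
    and "coprime (map_poly red q) (map_poly red s)"
  shows "\<exists>U W. U * s + W * q = 1"
proof -
  obtain A' B' where bezout: "A' * map_poly red q + B' * map_poly red s = 1"
    using field_poly_coprime_imp_bezout assms(5) by blast
  have "surj (map_poly red)"
    using surj_map_poly assms(2) hom unfolding is_ring_hom_def by blast
  then obtain A B where AB: "map_poly red A = A'" "map_poly red B = B'"
    by (metis surjD)
  define E where "E = A * q + B * s - 1"
  have "map_poly red E = 0"
    using hom bezout
    by (simp add: E_def AB map_poly_hom_diff map_poly_hom_add map_poly_hom_mult is_ring_hom_def)
  then have "E ^ n = 0"
    using map_poly_eq_0_imp_nilpotent ker assms(4) by blast
  then have "(A * q + B * s) * (\<Sum>i<n. (- E) ^ i) = 1"
    using one_plus_nilpotent_inverse by (fastforce simp: E_def)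
  then have "((\<Sum>i<n. (- E) ^ i) * B) * s + ((\<Sum>i<n. (- E) ^ i) * A) * q = 1"
    by (simp add: algebra_simps)
  then show ?thesis by blast
qed

lemma finite_chain_ring_nilpotent: "finite_chain_ring a n \<Longrightarrow> a ^ n = 0"
  unfolding finite_chain_ring_def by (elim conjE)

lemma Const_is_ring_hom: "is_ring_hom (Const :: 'a::comm_ring_1 \<Rightarrow> 'a mpoly)"
  unfolding is_ring_hom_def Const_def by (simp add: single_add mult_single)

lemma in_var_add: "in_var i (p + q) = in_var i p + in_var i q"
  unfolding in_var_def by (simp add: map_poly_hom_add [OF Const_is_ring_hom])

lemma in_var_mult: "in_var i (p * q) = in_var i p * in_var i q"
  unfolding in_var_def by (simp add: map_poly_hom_mult [OF Const_is_ring_hom])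

lemma in_var_one: "in_var i 1 = 1"
  unfolding in_var_def by (simp add: Const_def)

lemma vars_add: "vars (f + g) \<subseteq> vars f \<union> vars g"
  unfolding vars_def using keys_add [of f g] by blast

lemma vars_mult: "vars ((f :: 'a::comm_ring_1 mpoly) * g) \<subseteq> vars f \<union> vars g"
proof
  fix j assume "j \<in> vars (f * g)"
  then obtain m where m: "m \<in> Poly_Mapping.keys (f * g)" "j \<in> Poly_Mapping.keys m"
    unfolding vars_def by blast
  then obtain m1 m2 where "m = m1 + m2" "m1 \<in> Poly_Mapping.keys f" "m2 \<in> Poly_Mapping.keys g"
    using keys_mult [of f g] by blast
  then show "j \<in> vars f \<union> vars g"
    using m(2) keys_add [of m1 m2] unfolding vars_def by blast
qed

lemma polys_in_add: "f \<in> polys_in V \<Longrightarrow> g \<in> polys_in V \<Longrightarrow> f + g \<in> polys_in V"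
  unfolding polys_in_def using vars_add [of f g] by blast

lemma polys_in_mult:
  "f \<in> polys_in V \<Longrightarrow> g \<in> polys_in V \<Longrightarrow> (f :: 'a::comm_ring_1 mpoly) * g \<in> polys_in V"
  unfolding polys_in_def using vars_mult [of f g] by blast

lemma polys_in_Const: "Const c \<in> polys_in V"
  unfolding polys_in_def vars_def Const_def by simp

lemma polys_in_zero: "0 \<in> polys_in V"
  unfolding polys_in_def vars_def by simp

lemma polys_in_one: "(1 :: 'a::comm_ring_1 mpoly) \<in> polys_in V"
  using polys_in_Const [of 1 V] by (simp add: Const_def)

lemma polys_in_Var: "i \<in> V \<Longrightarrow> (Var i :: 'a::comm_ring_1 mpoly) \<in> polys_in V"
  unfolding polys_in_def vars_def Var_def by simp

lemma polys_in_mono: "V \<subseteq> W \<Longrightarrow> polys_in V \<subseteq> polys_in W"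
  unfolding polys_in_def by auto

lemma polys_in_sum: "(\<And>x. x \<in> A \<Longrightarrow> f x \<in> polys_in V) \<Longrightarrow> sum f A \<in> polys_in V"
  by (induction A rule: infinite_finite_induct) (auto simp: polys_in_zero polys_in_add)

lemma polys_in_prod:
  "(\<And>x. x \<in> A \<Longrightarrow> f x \<in> polys_in V) \<Longrightarrow> (prod f A :: 'a::comm_ring_1 mpoly) \<in> polys_in V"
  by (induction A rule: infinite_finite_induct) (auto simp: polys_in_one polys_in_mult)

lemma in_var_in_polys_in: "i \<in> V \<Longrightarrow> (in_var i p :: 'a::comm_ring_1 mpoly) \<in> polys_in V"
proof (induction p rule: pCons_induct)
  case 0
  then show ?case by (simp add: in_var_def polys_in_zero)
next
  case (pCons c p)
  have "in_var i (pCons c p) = Const c + Var i * in_var i p"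
    unfolding in_var_def by (simp add: map_poly_pCons Const_def)
  then show ?case
    using pCons by (simp add: polys_in_add polys_in_Const polys_in_mult polys_in_Var)
qed

lemma ideal_gen_zero: "0 \<in> ideal_gen V G"
  unfolding ideal_gen_def using polys_in_zero by force

lemma ideal_gen_add: "x \<in> ideal_gen V G \<Longrightarrow> y \<in> ideal_gen V G \<Longrightarrow> x + y \<in> ideal_gen V G"
proof -
  assume "x \<in> ideal_gen V G" "y \<in> ideal_gen V G"
  then obtain c d where c: "\<forall>g\<in>G. c g \<in> polys_in V" "x = (\<Sum>g\<in>G. c g * g)"
    and d: "\<forall>g\<in>G. d g \<in> polys_in V" "y = (\<Sum>g\<in>G. d g * g)"
    unfolding ideal_gen_def by blast
  then have "x + y = (\<Sum>g\<in>G. (c g + d g) * g)" "\<forall>g\<in>G. c g + d g \<in> polys_in V"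
    by (simp_all add: sum.distrib distrib_right polys_in_add)
  then show ?thesis
    unfolding ideal_gen_def by (intro CollectI exI [of _ "\<lambda>g. c g + d g"]) simp
qed

lemma ideal_gen_mult_left: "x \<in> ideal_gen V G \<Longrightarrow> p \<in> polys_in V \<Longrightarrow> p * x \<in> ideal_gen V G"
proof -
  assume "x \<in> ideal_gen V G" and p: "p \<in> polys_in V"
  then obtain c where c: "\<forall>g\<in>G. c g \<in> polys_in V" "x = (\<Sum>g\<in>G. c g * g)"
    unfolding ideal_gen_def by blast
  then have "p * x = (\<Sum>g\<in>G. (p * c g) * g)" "\<forall>g\<in>G. p * c g \<in> polys_in V"
    using p by (simp_all add: sum_distrib_left mult.assoc polys_in_mult)
  then show ?thesis
    unfolding ideal_gen_def by (intro CollectI exI [of _ "\<lambda>g. p * c g"]) simp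
qed

lemma ideal_gen_mult_right: "x \<in> ideal_gen V G \<Longrightarrow> p \<in> polys_in V \<Longrightarrow> x * p \<in> ideal_gen V G"
  using ideal_gen_mult_left by (metis mult.commute)

lemma ideal_gen_diff:
  "x \<in> ideal_gen V G \<Longrightarrow> y \<in> ideal_gen V G \<Longrightarrow> (x :: 'a::comm_ring_1 mpoly) - y \<in> ideal_gen V G"
proof -
  assume "x \<in> ideal_gen V G" "y \<in> ideal_gen V G"
  then have "x + Const (- 1) * y \<in> ideal_gen V G"
    by (intro ideal_gen_add ideal_gen_mult_left polys_in_Const)
  moreover have "x + Const (- 1) * y = x - y"
    by (simp add: Const_def single_uminus)
  ultimately show ?thesis by simp
qed

lemma ideal_gen_sum: "(\<And>x. x \<in> A \<Longrightarrow> f x \<in> ideal_gen V G) \<Longrightarrow> sum f A \<in> ideal_gen V G"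
  by (induction A rule: infinite_finite_induct) (auto simp: ideal_gen_zero ideal_gen_add)

lemma generator_in_ideal_gen: "finite G \<Longrightarrow> g \<in> G \<Longrightarrow> g \<in> ideal_gen V G"
proof -
  assume "finite G" "g \<in> G"
  have "(\<Sum>h\<in>G. (if h = g then 1 else 0) * h) = (\<Sum>h\<in>G. if h = g then h else 0)"
    by (rule sum.cong) auto
  with \<open>finite G\<close> \<open>g \<in> G\<close> have "g = (\<Sum>h\<in>G. (if h = g then 1 else 0) * h)"
    by simp
  then show ?thesis
    unfolding ideal_gen_def by (auto intro!: exI [of _ "\<lambda>h. if h = g then 1 else 0"]
        simp: polys_in_one polys_in_zero)
qed

lemma ideal_gen_subset_polys_in: "G \<subseteq> polys_in V \<Longrightarrow> ideal_gen V G \<subseteq> polys_in V"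
  unfolding ideal_gen_def by (auto intro!: polys_in_sum polys_in_mult)

lemma annihilates_ideal_gen:
  assumes "\<And>g. g \<in> G \<Longrightarrow> g * h \<in> ideal_gen V T" and "f \<in> ideal_gen V G"
  shows "f * h \<in> ideal_gen V T"
proof -
  obtain c where c: "\<forall>g\<in>G. c g \<in> polys_in V" "f = (\<Sum>g\<in>G. c g * g)"
    using assms(2) unfolding ideal_gen_def by blast
  then have "f * h = (\<Sum>g\<in>G. c g * (g * h))"
    by (simp add: sum_distrib_right mult.assoc)
  also have "\<dots> \<in> ideal_gen V T"
    using c(1) assms(1) by (intro ideal_gen_sum) (simp add: ideal_gen_mult_left)
  finally show ?thesis .
qed

lemma ideal_gen_subset:
  assumes "G \<subseteq> ideal_gen V H" shows "ideal_gen V G \<subseteq> ideal_gen V H"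
proof
  fix f assume "f \<in> ideal_gen V G"
  then show "f \<in> ideal_gen V H"
    using annihilates_ideal_gen [of G 1 V H f] assms by auto
qed

lemma ideal_gen_mono_vars: "V \<subseteq> W \<Longrightarrow> ideal_gen V G \<subseteq> ideal_gen W G"
  unfolding ideal_gen_def using polys_in_mono by blast

lemma ideal_gen_mono: "G \<subseteq> H \<Longrightarrow> finite H \<Longrightarrow> ideal_gen V G \<subseteq> ideal_gen V H"
  using generator_in_ideal_gen by (intro ideal_gen_subset) blast

definition invertible_mod :: "nat set \<Rightarrow> 'a::comm_ring_1 mpoly set \<Rightarrow> 'a mpoly \<Rightarrow> bool" where
  "invertible_mod V G x \<longleftrightarrow> x \<in> polys_in V \<and> (\<exists>y\<in>polys_in V. x * y - 1 \<in> ideal_gen V G)"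

lemma invertible_mod_one: "invertible_mod V G 1"
  unfolding invertible_mod_def by (auto intro!: bexI [of _ 1] polys_in_one ideal_gen_zero)

lemma invertible_mod_mult:
  assumes "invertible_mod V G x" "invertible_mod V G y"
  shows "invertible_mod V G (x * y)"
proof -
  obtain x' y' where x': "x' \<in> polys_in V" "x * x' - 1 \<in> ideal_gen V G"
    and y': "y' \<in> polys_in V" "y * y' - 1 \<in> ideal_gen V G"
    using assms unfolding invertible_mod_def by blast
  have "(x * y) * (x' * y') - 1 = (x * x' - 1) * (y * y') + (y * y' - 1)"
    by (simp add: algebra_simps)
  also have "\<dots> \<in> ideal_gen V G"
    using assms x' y' unfolding invertible_mod_def
    by (intro ideal_gen_add ideal_gen_mult_right polys_in_mult) auto
  finally show ?thesis
    using assms x' y' unfolding invertible_mod_def by (blast intro: polys_in_mult)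
qed

lemma invertible_mod_prod:
  "(\<And>i. i \<in> A \<Longrightarrow> invertible_mod V G (f i)) \<Longrightarrow> invertible_mod V G (prod f A)"
  by (induction A rule: infinite_finite_induct) (auto simp: invertible_mod_one invertible_mod_mult)

lemma invertible_mod_if_bezout:
  assumes "x \<in> polys_in V" "u \<in> polys_in V" "v \<in> polys_in V" "y \<in> ideal_gen V G"
    and "u * y + v * x - 1 \<in> ideal_gen V G"
  shows "invertible_mod V G x"
proof -
  have "x * v - 1 = (u * y + v * x - 1) - u * y"
    by (simp add: algebra_simps)
  also have "\<dots> \<in> ideal_gen V G"
    using ideal_gen_diff [OF assms(5) ideal_gen_mult_left [OF assms(4,2)]] .
  finally show ?thesis
    using assms unfolding invertible_mod_def by blast
qed

lemma mem_ideal_gen_if_mult_invertible_mod: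
  assumes "invertible_mod V G h" "f \<in> polys_in V" "f * h \<in> ideal_gen V G"
  shows "f \<in> ideal_gen V G"
proof -
  obtain y where y: "y \<in> polys_in V" "h * y - 1 \<in> ideal_gen V G"
    using assms(1) unfolding invertible_mod_def by blast
  have "f = (f * h) * y - f * (h * y - 1)"
    by (simp add: algebra_simps)
  also have "\<dots> \<in> ideal_gen V G"
    using ideal_gen_diff [OF ideal_gen_mult_right [OF assms(3) y(1)] ideal_gen_mult_left [OF y(2) assms(2)]] .
  finally show ?thesis .
qed

lemma annihilator_eq_ideal_gen:
  assumes "finite G" "finite T" "G \<union> T \<subseteq> polys_in V"
    and annihilates: "\<And>g. g \<in> G \<Longrightarrow> g * h \<in> ideal_gen V T"
    and invertible: "invertible_mod V (G \<union> T) h"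
  shows "{f \<in> polys_in V. f * h \<in> ideal_gen V T} = ideal_gen V (G \<union> T)"
proof
  have "h \<in> polys_in V"
    using invertible unfolding invertible_mod_def by blast
  then have "g * h \<in> ideal_gen V T" if "g \<in> G \<union> T" for g
    using that annihilates generator_in_ideal_gen [OF \<open>finite T\<close>] ideal_gen_mult_right by blast
  moreover have "ideal_gen V (G \<union> T) \<subseteq> polys_in V"
    using assms(3) by (rule ideal_gen_subset_polys_in)
  ultimately show "ideal_gen V (G \<union> T) \<subseteq> {f \<in> polys_in V. f * h \<in> ideal_gen V T}"
    using annihilates_ideal_gen [where G = "G \<union> T"] by blast
  have "ideal_gen V T \<subseteq> ideal_gen V (G \<union> T)"
    using assms(1,2) by (intro ideal_gen_mono) auto
  then show "{f \<in> polys_in V. f * h \<in> ideal_gen V T} \<subseteq> ideal_gen V (G \<union> T)"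
    using mem_ideal_gen_if_mult_invertible_mod [OF invertible] by blast
qed

lemma invertible_mod_in_var_cofactor:
  fixes red :: "'a::comm_ring_1 \<Rightarrow> 'k::field"
  assumes "is_ring_hom red" "surj red" "{x. red x = 0} = range (\<lambda>y. a * y)" "a ^ n = 0"
    and "squarefree (map_poly red (q * s))" "i \<in> V" "in_var i q \<in> ideal_gen V G"
  shows "invertible_mod V G (in_var i s)"
proof -
  have "coprime (map_poly red q) (map_poly red s)"
    using assms(5) by (simp add: map_poly_hom_mult [OF assms(1)] squarefree_mult_imp_coprime)
  then obtain U W where "U * s + W * q = 1"
    using coprime_reduction_imp_bezout [OF assms(1-4)] by blast
  then have "in_var i W * in_var i q + in_var i U * in_var i s - 1 = 0"
    by (metis in_var_add in_var_mult in_var_one add.commute diff_self)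
  then show ?thesis
    using assms(6,7) ideal_gen_zero
    by (intro invertible_mod_if_bezout [where u = "in_var i W" and v = "in_var i U"])
       (auto intro: in_var_in_polys_in)
qed

lemma invertible_mod_if_coprime_to_generator:
  assumes "W \<subseteq> V" "G' \<subseteq> G" "finite G" "z \<in> G"
    and "x \<in> polys_in W" "u \<in> polys_in W" "v \<in> polys_in W" "u * z + v * x - 1 \<in> ideal_gen W G'"
  shows "invertible_mod V G x"
proof -
  have "polys_in W \<subseteq> polys_in V"
    using assms(1) by (rule polys_in_mono)
  moreover have "ideal_gen W G' \<subseteq> ideal_gen V G"
    using ideal_gen_mono_vars [OF assms(1)] ideal_gen_mono [OF assms(2,3)] by (rule order_trans)
  moreover have "z \<in> ideal_gen V G"
    using assms(3,4) by (rule generator_in_ideal_gen)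
  ultimately show ?thesis
    using assms(5-8) by (intro invertible_mod_if_bezout [where u = u and v = v and y = z]) auto
qed

lemma congruent_factor_annihilates:
  assumes annihilates: "\<And>g. g \<in> Q \<Longrightarrow> g * h \<in> ideal_gen V T"
    and "q - z * \<sigma> \<in> ideal_gen V Q" "q * s \<in> ideal_gen V T" "h \<in> polys_in V" "s \<in> polys_in V"
  shows "z * (h * (s * \<sigma>)) \<in> ideal_gen V T"
proof -
  have "s * ((q - z * \<sigma>) * h) \<in> ideal_gen V T"
    using annihilates_ideal_gen [OF annihilates assms(2)] assms(5) by (rule ideal_gen_mult_left)
  moreover have "(q * s) * h \<in> ideal_gen V T"
    using assms(3,4) by (rule ideal_gen_mult_right)
  moreover have "z * (h * (s * \<sigma>)) = (q * s) * h - s * ((q - z * \<sigma>) * h)"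
    by (simp add: algebra_simps)
  ultimately show ?thesis
    by (simp add: ideal_gen_diff)
qed

lemma triangular_generators_annihilate:
  fixes q s t :: "nat \<Rightarrow> 'a::comm_ring_1 poly" and z \<sigma> :: "nat \<Rightarrow> 'a mpoly"
  assumes factor: "\<And>i. i \<in> {1..r} \<Longrightarrow> t i = q i * s i"
    and \<sigma>_in: "\<And>i. i \<in> {2..r} \<Longrightarrow> \<sigma> i \<in> polys_in {1..r}"
    and reduction: "\<And>i. i \<in> {2..r} \<Longrightarrow>
      in_var i (q i) - z i * \<sigma> i \<in> ideal_gen {1..r} ({in_var 1 (q 1)} \<union> z ` {2..<i})"
    and "1 \<le> k" "k \<le> r" "g \<in> {in_var 1 (q 1)} \<union> z ` {2..k}"
  shows "g * ((\<Prod>i\<in>{1..k}. in_var i (s i)) * (\<Prod>i\<in>{2..k}. \<sigma> i))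
           \<in> ideal_gen {1..r} ((\<lambda>i. in_var i (t i)) ` {1..r})"
  using \<open>1 \<le> k\<close> \<open>k \<le> r\<close> \<open>g \<in> _\<close>
proof (induction k arbitrary: g rule: nat_induct_at_least)
  case base
  then have "g * ((\<Prod>i\<in>{1..1}. in_var i (s i)) * (\<Prod>i\<in>{2..1}. \<sigma> i)) = in_var 1 (t 1)"
    using factor by (simp add: in_var_mult)
  then show ?case
    using base by (simp add: generator_in_ideal_gen)
next
  case (Suc k)
  define I where "I = ideal_gen {1..r} ((\<lambda>i. in_var i (t i)) ` {1..r})"
  define h where "h = (\<Prod>i\<in>{1..k}. in_var i (s i)) * (\<Prod>i\<in>{2..k}. \<sigma> i)"
  define m where "m = Suc k"
  have m: "m \<in> {2..r}" and Suc_k: "Suc k = m" and earlier: "{2..<m} = {2..k}"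
    using Suc.hyps Suc.prems by (auto simp: m_def)
  have h_in: "h \<in> polys_in {1..r}" and s_in: "in_var m (s m) \<in> polys_in {1..r}"
    using Suc.prems m \<sigma>_in unfolding h_def
    by (auto intro!: polys_in_mult polys_in_prod in_var_in_polys_in)
  have IH: "g' * h \<in> I" if "g' \<in> {in_var 1 (q 1)} \<union> z ` {2..<m}" for g'
    using Suc.IH Suc.prems that unfolding I_def h_def earlier by simp
  have "g * (h * (in_var m (s m) * \<sigma> m)) \<in> I"
  proof (cases "g = z m")
    case True
    have "in_var m (q m) * in_var m (s m) \<in> I"
      using m factor unfolding I_def in_var_mult [symmetric] by (intro generator_in_ideal_gen) auto
    then show ?thesis
      using True IH reduction [OF m] h_in s_in unfolding I_def
      by (intro congruent_factor_annihilates [where Q = "{in_var 1 (q 1)} \<union> z ` {2..<m}"]) auto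
  next
    case False
    moreover have "{2..m} = insert m {2..<m}"
      using m by auto
    ultimately have "g * h \<in> I"
      using Suc.prems IH by (auto simp: Suc_k)
    then have "(g * h) * (in_var m (s m) * \<sigma> m) \<in> I"
      using s_in \<sigma>_in [OF m] unfolding I_def by (blast intro: ideal_gen_mult_right polys_in_mult)
    then show ?thesis
      by (simp add: mult.assoc)
  qed
  moreover have "(\<Prod>i\<in>{1..m}. in_var i (s i)) * (\<Prod>i\<in>{2..m}. \<sigma> i) = h * (in_var m (s m) * \<sigma> m)"
    using Suc.hyps by (simp add: h_def m_def prod.nat_ivl_Suc' algebra_simps)
  ultimately show ?case
    by (simp add: Suc_k I_def)
qed

lemma in_var_q_mem_triangular_ideal:
  fixes q :: "nat \<Rightarrow> 'a::comm_ring_1 poly" and z \<sigma> :: "nat \<Rightarrow> 'a mpoly"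
  assumes \<sigma>_in: "\<And>i. i \<in> {2..r} \<Longrightarrow> \<sigma> i \<in> polys_in {1..r}"
    and reduction: "\<And>i. i \<in> {2..r} \<Longrightarrow>
      in_var i (q i) - z i * \<sigma> i \<in> ideal_gen {1..r} ({in_var 1 (q 1)} \<union> z ` {2..<i})"
    and "finite G" "{in_var 1 (q 1)} \<union> z ` {2..r} \<subseteq> G" "i \<in> {1..r}"
  shows "in_var i (q i) \<in> ideal_gen {1..r} G"
proof (cases "i = 1")
  case True
  then show ?thesis
    using assms(3,4) by (intro generator_in_ideal_gen) auto
next
  case False
  then have i: "i \<in> {2..r}"
    using \<open>i \<in> {1..r}\<close> by auto
  have "ideal_gen {1..r} ({in_var 1 (q 1)} \<union> z ` {2..<i}) \<subseteq> ideal_gen {1..r} G"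
    using i assms(3,4) by (intro ideal_gen_mono) auto
  then have "in_var i (q i) - z i * \<sigma> i \<in> ideal_gen {1..r} G"
    using reduction [OF i] by blast
  moreover have "z i * \<sigma> i \<in> ideal_gen {1..r} G"
    using i assms(3,4) \<sigma>_in by (intro ideal_gen_mult_right generator_in_ideal_gen) auto
  ultimately show ?thesis
    using ideal_gen_add by force
qed

theorem mainTheorem2:
  fixes a :: "'a::comm_ring_1" and nt :: nat
    and red :: "'a \<Rightarrow> 'k::field" and emb :: "'k \<Rightarrow> 'f::field"
    and r :: nat and tp :: "nat \<Rightarrow> 'a poly" and \<mu> :: "nat \<Rightarrow> 'f"
    and p w :: "nat \<Rightarrow> 'f poly" and q s :: "nat \<Rightarrow> 'a poly"
    and z \<sigma> :: "nat \<Rightarrow> 'a mpoly"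
  assumes chain: "finite_chain_ring a nt"
    and red_hom: "is_ring_hom red" and red_surj: "surj red"
    and red_ker: "{x. red x = 0} = range (\<lambda>y. a * y)"
    and closure: "is_algebraic_closure emb"
    and r_pos: "1 \<le> r"
    and tp_monic: "\<forall>i\<in>{1..r}. lead_coeff (tp i) = 1"
    and tp_sqfree: "\<forall>i\<in>{1..r}. squarefree (map_poly red (tp i))"
    and mu_H: "\<forall>i\<in>{1..r}. \<mu> i \<in> {x. poly (map_poly emb (map_poly red (tp i))) x = 0}"
    and p_min: "\<forall>i\<in>{1..r}. is_minpoly (range emb) (\<mu> i) (p i)"
    and w_min: "\<forall>i\<in>{2..r}. is_minpoly (gen_subfield (range emb \<union> \<mu> ` {1..<i})) (\<mu> i) (w i)"
    and q_monic: "\<forall>i\<in>{1..r}. lead_coeff (q i) = 1"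
    and q_factor: "\<forall>i\<in>{1..r}. tp i = q i * s i"
    and q_red: "\<forall>i\<in>{1..r}. map_poly emb (map_poly red (q i)) = p i"
    and z_in: "\<forall>i\<in>{2..r}. z i \<in> polys_in {1..i} \<and> \<sigma> i \<in> polys_in {1..i}"
    and z_monic: "\<forall>i\<in>{2..r}. \<exists>z'. z' \<in> polys_in {1..i} \<and> monic_in i z' \<and>
        z i - z' \<in> ideal_gen {1..i} ({in_var 1 (q 1)} \<union> z ` {2..<i})"
    and \<sigma>_monic: "\<forall>i\<in>{2..r}. \<exists>s'. s' \<in> polys_in {1..i} \<and> monic_in i s' \<and>
        \<sigma> i - s' \<in> ideal_gen {1..i} ({in_var 1 (q 1)} \<union> z ` {2..<i})"
    and z_fact: "\<forall>i\<in>{2..r}.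
        in_var i (q i) - z i * \<sigma> i \<in> ideal_gen {1..i} ({in_var 1 (q 1)} \<union> z ` {2..<i})"
    and z_coprime: "\<forall>i\<in>{2..r}. \<exists>u\<in>polys_in {1..i}. \<exists>v\<in>polys_in {1..i}.
        u * z i + v * \<sigma> i - 1 \<in> ideal_gen {1..i} ({in_var 1 (q 1)} \<union> z ` {2..<i})"
    and z_red: "\<forall>i\<in>{2..r}. eval_except i \<mu> (mmap (emb \<circ> red) (z i)) = w i"
    and \<sigma>_red: "\<forall>i\<in>{2..r}. eval_except i \<mu> (mmap (emb \<circ> red) (\<sigma> i)) = p i div w i"
  shows "{f \<in> polys_in {1..r}.
            f * ((\<Prod>i\<in>{1..r}. in_var i (s i)) * (\<Prod>i\<in>{2..r}. \<sigma> i))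
              \<in> ideal_gen {1..r} ((\<lambda>i. in_var i (tp i)) ` {1..r})}
         = ideal_gen {1..r} (({in_var 1 (q 1)} \<union> z ` {2..r}) \<union> (\<lambda>i. in_var i (tp i)) ` {1..r})"
proof -
  let ?Q = "{in_var 1 (q 1)} \<union> z ` {2..r}" and ?T = "(\<lambda>i. in_var i (tp i)) ` {1..r}"
  have widen: "polys_in {1..i} \<subseteq> polys_in {1..r}" "ideal_gen {1..i} G \<subseteq> ideal_gen {1..r} G"
    if "i \<in> {2..r}" for i and G :: "'a mpoly set"
    using that by (auto intro!: polys_in_mono ideal_gen_mono_vars)
  have z_\<sigma>_in: "z i \<in> polys_in {1..r}" "\<sigma> i \<in> polys_in {1..r}" if "i \<in> {2..r}" for i
    using z_in that widen(1) by blast+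
  have reduction: "in_var i (q i) - z i * \<sigma> i \<in> ideal_gen {1..r} ({in_var 1 (q 1)} \<union> z ` {2..<i})"
    if "i \<in> {2..r}" for i
    using subsetD [OF widen(2) [OF that] bspec [OF z_fact that]] .
  have "invertible_mod {1..r} (?Q \<union> ?T) (in_var i (s i))" if "i \<in> {1..r}" for i
    using that tp_sqfree q_factor in_var_q_mem_triangular_ideal [OF z_\<sigma>_in(2) reduction, of "?Q \<union> ?T"]
    by (intro invertible_mod_in_var_cofactor [OF red_hom red_surj red_ker
          finite_chain_ring_nilpotent [OF chain]]) auto
  moreover have "invertible_mod {1..r} (?Q \<union> ?T) (\<sigma> i)" if i: "i \<in> {2..r}" for i
  proof -
    obtain u v where "u \<in> polys_in {1..i}" "v \<in> polys_in {1..i}"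
      "u * z i + v * \<sigma> i - 1 \<in> ideal_gen {1..i} ({in_var 1 (q 1)} \<union> z ` {2..<i})"
      using z_coprime i by blast
    then show ?thesis
      using i z_in by (intro invertible_mod_if_coprime_to_generator [where z = "z i"]) auto
  qed
  ultimately have invertible:
    "invertible_mod {1..r} (?Q \<union> ?T) ((\<Prod>i\<in>{1..r}. in_var i (s i)) * (\<Prod>i\<in>{2..r}. \<sigma> i))"
    by (intro invertible_mod_mult invertible_mod_prod) auto
  have generators_in: "?Q \<union> ?T \<subseteq> polys_in {1..r}"
    using z_\<sigma>_in r_pos by (auto intro: in_var_in_polys_in)
  have annihilates:
    "g * ((\<Prod>i\<in>{1..r}. in_var i (s i)) * (\<Prod>i\<in>{2..r}. \<sigma> i)) \<in> ideal_gen {1..r} ?T"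
    if "g \<in> ?Q" for g
    by (rule triangular_generators_annihilate [of r tp q s \<sigma> z])
      (use q_factor z_\<sigma>_in(2) reduction r_pos that in auto)
  show ?thesis
    by (rule annihilator_eq_ideal_gen [OF _ _ generators_in annihilates invertible]) simp_all
qed

end
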